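(* Let $Q$ be a sketch with $d$ parameter holes, $z$ a trajectory, $v\in\mathbb{R}^d$, and $u\in\mathbb{R}^d_{>0}$ (all components positive). Let $t=[\![Q]\!]^{q}_{v,u}(z)\in\mathbb{R}\cup\{\pm\infty\}$. Then $t\cdot u+v$ is a boundary parameter of $z$ for $Q$, where by convention $\infty\cdot u+v:=\top$ and $(-\infty)\cdot u+v:=\bot$.
   Context: Fix a set $\mathcal{X}$ of states. A trajectory is a finite sequence $z=(x_0,\dots,x_{n-1})\in\mathcal{X}^*$ of length $n$; for $0\le i\le j\le n$, $z_{i:j}=(x_i,\dots,x_{j-1})$ (empty if $i=j$). Fix predicates of two kinds: a non-parametric predicate $\varphi$ has $\mathsf{sat}_\varphi:\mathcal{X}^*\to\{0,1\}$; a parametric predicate $\varphi$ has a bounded scoring function $\iota_\varphi:\mathcal{X}^*\to\mathbb{R}$. Sketches are generated by $Q::=\varphi_{??i}\mid\varphi\mid Q\,;\,Q\mid Q^k\mid Q\wedge Q$, where $\varphi_{??i}$ is a parametric predicate with a parameter hole labelled $i\in\{1,\dots,d\}$ ($d$ = number of parameter holes), $\varphi$ in the second case is non-parametric, and $Q^k$ ($k\ge1$) is $k$-fold sequencing $Q\,;\cdots;\,Q$. For $\theta\in\mathbb{R}^d$, $Q_\theta$ fills hole $??i$ with $\theta_i$, with Boolean semantics on $z$ of length $n$: $[\![\varphi_{\theta_i}]\!](z)=\mathbb{1}(\iota_\varphi(z)\ge\theta_i)$; $[\![\varphi]\!](z)=\mathsf{sat}_\varphi(z)$; $[\![Q_1\wedge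 Q_2]\!](z)=[\![Q_1]\!](z)\wedge[\![Q_2]\!](z)$; $[\![Q_1\,;\,Q_2]\!](z)=\bigvee_{k=0}^{n}([\![Q_1]\!](z_{0:k})\wedge[\![Q_2]\!](z_{k:n}))$. Quantitative semantics (values in $\mathbb{R}\cup\{\pm\infty\}$), for $v\in\mathbb{R}^d$, $u\in\mathbb{R}^d_{>0}$ and $z$ of length $n$: $[\![\varphi_{??i}]\!]^q_{v,u}(z)=(\iota_\varphi(z)-v_i)/u_i$; $[\![\varphi]\!]^q_{v,u}(z)=\infty$ if $\mathsf{sat}_\varphi(z)=1$ and $-\infty$ if $\mathsf{sat}_\varphi(z)=0$; $[\![Q_1\wedge Q_2]\!]^q_{v,u}(z)=\min\{[\![Q_1]\!]^q_{v,u}(z),[\![Q_2]\!]^q_{v,u}(z)\}$; $[\![Q_1\,;\,Q_2]\!]^q_{v,u}(z)=\max_{0\le k\le n}\min\{[\![Q_1]\!]^q_{v,u}(z_{0:k}),[\![Q_2]\!]^q_{v,u}(z_{k:n})\}$. For $x,y\in(\mathbb{R}\cup\{\pm\infty\})^d$, $\lfloor x,y\rceil=\{w\in\mathbb{R}^d:x_i<w_i\le y_i\ \forall i\}$. A boundary parameter of $z$ for $Q$ is $\theta\in\mathbb{R}^d\cup\{\bot,\top\}$ such that one of: (i) $\theta\in\mathbb{R}^d$, $[\![Q_\theta]\!](z)=1$, and $[\![Q_{\theta'}]\!](z)=0$ for all $\theta'\in\lfloor\theta,(\infty,\dots,\infty)\rceil$; (ii) $\theta=\bot$ and $[\![Q_{\theta'}]\!](z)=0$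 for all $\theta'\in\mathbb{R}^d$; (iii) $\theta=\top$ and $[\![Q_{\theta'}]\!](z)=1$ for all $\theta'\in\mathbb{R}^d$. *)

theory Defs
  imports Complex_Main "HOL-Library.Extended_Real"
begin

text \<open>Trajectories are lists of states of type 'x. Parameter vectors in R^d are
functions nat \<Rightarrow> real, of which only the components 1..d matter.\<close>

datatype 'x sketch =
    Param "'x list \<Rightarrow> real" nat
  | NonParam "'x list \<Rightarrow> bool"
  | Seq "'x sketch" "'x sketch"
  | Rep "'x sketch" nat
  | Conj "'x sketch" "'x sketch"

primrec wf_sketch :: "nat \<Rightarrow> 'x sketch \<Rightarrow> bool" where
  "wf_sketch d (Param iota i) = (i \<in> {1..d} \<and> (\<exists>B. \<forall>y. \<bar>iota y\<bar> \<le> B))"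
| "wf_sketch d (NonParam s) = True"
| "wf_sketch d (Seq Q1 Q2) = (wf_sketch d Q1 \<and> wf_sketch d Q2)"
| "wf_sketch d (Rep Q k) = (k \<ge> 1 \<and> wf_sketch d Q)"
| "wf_sketch d (Conj Q1 Q2) = (wf_sketch d Q1 \<and> wf_sketch d Q2)"

definition seqB :: "('x list \<Rightarrow> bool) \<Rightarrow> ('x list \<Rightarrow> bool) \<Rightarrow> 'x list \<Rightarrow> bool" where
  "seqB f g z = (\<exists>k \<le> length z. f (take k z) \<and> g (drop k z))"

fun iterB :: "('x list \<Rightarrow> bool) \<Rightarrow> nat \<Rightarrow> 'x list \<Rightarrow> bool" where
  "iterB f 0 = f"
| "iterB f (Suc 0) = f"
| "iterB f (Suc (Suc k)) = seqB f (iterB f (Suc k))"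

primrec semB :: "'x sketch \<Rightarrow> (nat \<Rightarrow> real) \<Rightarrow> 'x list \<Rightarrow> bool" where
  "semB (Param iota i) \<theta> z = (iota z \<ge> \<theta> i)"
| "semB (NonParam s) \<theta> z = s z"
| "semB (Seq Q1 Q2) \<theta> z = seqB (semB Q1 \<theta>) (semB Q2 \<theta>) z"
| "semB (Rep Q k) \<theta> z = iterB (semB Q \<theta>) k z"
| "semB (Conj Q1 Q2) \<theta> z = (semB Q1 \<theta> z \<and> semB Q2 \<theta> z)"

definition seqQ :: "('x list \<Rightarrow> ereal) \<Rightarrow> ('x list \<Rightarrow> ereal) \<Rightarrow> 'x list \<Rightarrow> ereal" where
  "seqQ f g z = Max ((\<lambda>k. min (f (take k z)) (g (drop k z))) ` {0..length z})"

fun iterQ :: "('x list \<Rightarrow> ereal) \<Rightarrow> nat \<Rightarrow> 'x list \<Rightarrow> ereal" where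
  "iterQ f 0 = f"
| "iterQ f (Suc 0) = f"
| "iterQ f (Suc (Suc k)) = seqQ f (iterQ f (Suc k))"

primrec semQ :: "'x sketch \<Rightarrow> (nat \<Rightarrow> real) \<Rightarrow> (nat \<Rightarrow> real) \<Rightarrow> 'x list \<Rightarrow> ereal" where
  "semQ (Param iota i) v u z = ereal ((iota z - v i) / u i)"
| "semQ (NonParam s) v u z = (if s z then \<infinity> else -\<infinity>)"
| "semQ (Seq Q1 Q2) v u z = seqQ (semQ Q1 v u) (semQ Q2 v u) z"
| "semQ (Rep Q k) v u z = iterQ (semQ Q v u) k z"
| "semQ (Conj Q1 Q2) v u z = min (semQ Q1 v u z) (semQ Q2 v u z)"

datatype bparam = BVec "nat \<Rightarrow> real" | BBot | BTop

definition box_above :: "nat \<Rightarrow> (nat \<Rightarrow> real) \<Rightarrow> (nat \<Rightarrow> real) set" where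
  "box_above d x = {w. \<forall>i\<in>{1..d}. x i < w i}"

definition boundary_param :: "nat \<Rightarrow> 'x sketch \<Rightarrow> 'x list \<Rightarrow> bparam \<Rightarrow> bool" where
  "boundary_param d Q z b = (case b of
      BVec \<theta> \<Rightarrow> semB Q \<theta> z \<and> (\<forall>\<theta>' \<in> box_above d \<theta>. \<not> semB Q \<theta>' z)
    | BBot \<Rightarrow> (\<forall>\<theta>'. \<not> semB Q \<theta>' z)
    | BTop \<Rightarrow> (\<forall>\<theta>'. semB Q \<theta>' z))"

definition scale_shift :: "ereal \<Rightarrow> (nat \<Rightarrow> real) \<Rightarrow> (nat \<Rightarrow> real) \<Rightarrow> bparam" where
  "scale_shift t u v = (case t of
      ereal r \<Rightarrow> BVec (\<lambda>i. r * u i + v i)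
    | PInfty \<Rightarrow> BTop
    | MInfty \<Rightarrow> BBot)"

end

theory Submission
  imports Defs
begin

text \<open>
Write \<open>r \<cdot> u + v\<close> for the parameter vector with components \<open>r u\<^sub>i + v\<^sub>i\<close>.
Because \<open>min\<close> and \<open>max\<close> are monotone exactly like \<open>\<and>\<close> and \<open>\<or>\<close>, a structural induction
shows that \<open>[[Q]]\<^sup>q(z) \<ge> r\<close> forces \<open>Q\<^sub>\<theta>\<close> to accept \<open>z\<close> whenever \<open>\<theta> \<le> r \<cdot> u + v\<close>
componentwise, while \<open>[[Q]]\<^sup>q(z) \<le> r\<close> forces it to reject \<open>z\<close> whenever \<open>\<theta> > r \<cdot> u + v\<close>.
For a finite value \<open>t\<close> both apply with \<open>r = t\<close>, which makes \<open>t \<cdot> u + v\<close> a boundary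
parameter. For \<open>t = \<plusminus>\<infinity>\<close> note that, as there are only \<open>d\<close> components and \<open>u > 0\<close>,
every \<open>\<theta>\<close> lies below \<open>r \<cdot> u + v\<close> for large \<open>r\<close> and above it for small \<open>r\<close>.
Of \<open>wf_sketch\<close> only the condition that hole labels lie in \<open>{1..d}\<close> is needed.
\<close>

lemma seqQ_le_iff:
  "seqQ f g z \<le> r \<longleftrightarrow> (\<forall>k\<le>length z. min (f (take k z)) (g (drop k z)) \<le> r)"
  unfolding seqQ_def by (subst Max_le_iff) auto

lemma seqQ_ge_iff:
  "r \<le> seqQ f g z \<longleftrightarrow> (\<exists>k\<le>length z. r \<le> min (f (take k z)) (g (drop k z)))"
  unfolding seqQ_def by (subst Max_ge_iff) auto

lemma seqB_if_seqQ_ge: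
  assumes "\<And>y. r \<le> fq y \<Longrightarrow> fb y" "\<And>y. r \<le> gq y \<Longrightarrow> gb y" "r \<le> seqQ fq gq z"
  shows "seqB fb gb z"
  using assms unfolding seqB_def seqQ_ge_iff by auto

lemma not_seqB_if_seqQ_le:
  assumes "\<And>y. fq y \<le> r \<Longrightarrow> \<not> fb y" "\<And>y. gq y \<le> r \<Longrightarrow> \<not> gb y" "seqQ fq gq z \<le> r"
  shows "\<not> seqB fb gb z"
  using assms unfolding seqB_def seqQ_le_iff by (metis min_le_iff_disj)

lemma iterB_if_iterQ_ge:
  assumes "\<And>y. r \<le> fq y \<Longrightarrow> fb y"
  shows "r \<le> iterQ fq k z \<Longrightarrow> iterB fb k z"
  using assms
proof (induction fq k arbitrary: z rule: iterQ.induct)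
  case (3 f k)
  then show ?case using seqB_if_seqQ_ge[of r f fb "iterQ f (Suc k)" "iterB fb (Suc k)"] by simp
qed auto

lemma not_iterB_if_iterQ_le:
  assumes "\<And>y. fq y \<le> r \<Longrightarrow> \<not> fb y"
  shows "iterQ fq k z \<le> r \<Longrightarrow> \<not> iterB fb k z"
  using assms
proof (induction fq k arbitrary: z rule: iterQ.induct)
  case (3 f k)
  then show ?case using not_seqB_if_seqQ_le[of f r fb "iterQ f (Suc k)" "iterB fb (Suc k)"] by simp
qed auto

lemma semB_if_semQ_ge:
  assumes "wf_sketch d Q" "\<forall>i\<in>{1..d}. 0 < u i" "\<forall>i\<in>{1..d}. \<theta> i \<le> r * u i + v i"
    and "ereal r \<le> semQ Q v u z"
  shows "semB Q \<theta> z"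
  using assms(1,4)
proof (induction Q arbitrary: z)
  case (Param iota i)
  then have "i \<in> {1..d}" "r \<le> (iota z - v i) / u i" by simp_all
  with assms(2,3) show ?case by (fastforce simp: pos_le_divide_eq)
next
  case (Seq Q1 Q2)
  then show ?case
    using seqB_if_seqQ_ge[of "ereal r" "semQ Q1 v u" "semB Q1 \<theta>" "semQ Q2 v u" "semB Q2 \<theta>"]
    by simp
next
  case (Rep Q k)
  then show ?case using iterB_if_iterQ_ge[of "ereal r" "semQ Q v u" "semB Q \<theta>"] by simp
qed (auto split: if_splits)

lemma not_semB_if_semQ_le:
  assumes "wf_sketch d Q" "\<forall>i\<in>{1..d}. 0 < u i" "\<forall>i\<in>{1..d}. r * u i + v i < \<theta> i"
    and "semQ Q v u z \<le> ereal r"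
  shows "\<not> semB Q \<theta> z"
  using assms(1,4)
proof (induction Q arbitrary: z)
  case (Param iota i)
  then have "i \<in> {1..d}" "(iota z - v i) / u i \<le> r" by simp_all
  with assms(2,3) show ?case by (fastforce simp: pos_divide_le_eq)
next
  case (Seq Q1 Q2)
  then show ?case
    using not_seqB_if_seqQ_le[of "semQ Q1 v u" "ereal r" "semB Q1 \<theta>" "semQ Q2 v u" "semB Q2 \<theta>"]
    by simp
next
  case (Rep Q k)
  then show ?case using not_iterB_if_iterQ_le[of "semQ Q v u" "ereal r" "semB Q \<theta>"] by simp
next
  case (Conj Q1 Q2)
  then show ?case by (auto simp: min_le_iff_disj)
qed (auto split: if_splits)

lemma obtain_scale_shift_above:
  fixes \<theta> u v :: "'a \<Rightarrow> real"
  assumes "finite I" "\<forall>i\<in>I. 0 < u i"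
  obtains r where "\<forall>i\<in>I. \<theta> i \<le> r * u i + v i"
proof -
  obtain r where "\<forall>i\<in>I. (\<theta> i - v i) / u i \<le> r"
    using bdd_above_finite[of "(\<lambda>i. (\<theta> i - v i) / u i) ` I"] assms(1)
    unfolding bdd_above_def by auto
  with assms(2) show thesis by (intro that[of r]) (auto simp: pos_divide_le_eq)
qed

lemma obtain_scale_shift_below:
  fixes \<theta> u v :: "'a \<Rightarrow> real"
  assumes "finite I" "\<forall>i\<in>I. 0 < u i"
  obtains r where "\<forall>i\<in>I. r * u i + v i < \<theta> i"
proof -
  obtain r where "\<forall>i\<in>I. r \<le> (\<theta> i - v i) / u i"
    using bdd_below_finite[of "(\<lambda>i. (\<theta> i - v i) / u i) ` I"] assms(1)
    unfolding bdd_below_def by auto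
  with assms(2) show thesis
    by (intro that[of "r - 1"]) (fastforce simp: pos_le_divide_eq algebra_simps)
qed

theorem theorem3:
  fixes Q :: "'x sketch" and d :: nat and z :: "'x list"
    and v u :: "nat \<Rightarrow> real"
  assumes "wf_sketch d Q"
    and "\<forall>i\<in>{1..d}. u i > 0"
  shows "boundary_param d Q z (scale_shift (semQ Q v u z) u v)"
proof (cases "semQ Q v u z")
  case (real r)
  have "semB Q (\<lambda>i. r * u i + v i) z"
    by (rule semB_if_semQ_ge[OF assms, where r = r and v = v]) (simp_all add: real)
  moreover have "\<not> semB Q \<theta> z" if "\<theta> \<in> box_above d (\<lambda>i. r * u i + v i)" for \<theta>
    using not_semB_if_semQ_le[OF assms] real that by (simp add: box_above_def)
  ultimately show ?thesis using real by (simp add: boundary_param_def scale_shift_def)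
next
  case PInf
  have "semB Q \<theta> z" for \<theta>
  proof -
    obtain r where "\<forall>i\<in>{1..d}. \<theta> i \<le> r * u i + v i"
      using obtain_scale_shift_above[OF _ assms(2)] by blast
    then show ?thesis using semB_if_semQ_ge[OF assms] PInf by simp
  qed
  then show ?thesis using PInf by (simp add: boundary_param_def scale_shift_def)
next
  case MInf
  have "\<not> semB Q \<theta> z" for \<theta>
  proof -
    obtain r where "\<forall>i\<in>{1..d}. r * u i + v i < \<theta> i"
      using obtain_scale_shift_below[OF _ assms(2)] by blast
    then show ?thesis using not_semB_if_semQ_le[OF assms] MInf by simp
  qed
  then show ?thesis using MInf by (simp add: boundary_param_def scale_shift_def)
qed

end
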